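(* Let $t$ be a positive integer and let $G$ be a graph on $n$ vertices. Suppose that $|E(G)|>\left(1-\frac{1}{t+1}\right)(t-1)n$ if $t$ is odd, and $|E(G)|>\left(1-\frac{1}{t}\right)(t-1)n$ if $t$ is even. Then $G$ contains (as a subgraph) every tree $T$ having $t$ edges. *)

theory Defs
  imports Complex_Main
begin

definition simple_graph :: "'a set \<Rightarrow> 'a set set \<Rightarrow> bool" where
  "simple_graph V E \<longleftrightarrow> finite V \<and> (\<forall>e\<in>E. e \<subseteq> V \<and> card e = 2)"

definition adj :: "'a set set \<Rightarrow> 'a \<Rightarrow> 'a \<Rightarrow> bool" where
  "adj E u v \<longleftrightarrow> {u, v} \<in> E"

definition connected_graph :: "'a set \<Rightarrow> 'a set set \<Rightarrow> bool" where
  "connected_graph V E \<longleftrightarrow> V \<noteq> {} \<and>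
     (\<forall>u\<in>V. \<forall>v\<in>V. (u, v) \<in> {(x, y). adj E x y}\<^sup>*)"

definition is_cycle :: "'a set set \<Rightarrow> 'a list \<Rightarrow> bool" where
  "is_cycle E vs \<longleftrightarrow> length vs \<ge> 3 \<and> distinct vs \<and>
     (\<forall>i. Suc i < length vs \<longrightarrow> adj E (vs ! i) (vs ! Suc i)) \<and>
     adj E (last vs) (hd vs)"

definition acyclic_graph :: "'a set set \<Rightarrow> bool" where
  "acyclic_graph E \<longleftrightarrow> (\<nexists>vs. is_cycle E vs)"

definition is_tree :: "'a set \<Rightarrow> 'a set set \<Rightarrow> bool" where
  "is_tree V E \<longleftrightarrow> simple_graph V E \<and> connected_graph V E \<and> acyclic_graph E"

definition contains_subgraph :: "'a set \<Rightarrow> 'a set set \<Rightarrow> 'b set \<Rightarrow> 'b set set \<Rightarrow> bool" where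
  "contains_subgraph V E W F \<longleftrightarrow>
     (\<exists>f. inj_on f W \<and> f ` W \<subseteq> V \<and> (\<forall>e\<in>F. f ` e \<in> E))"

end

theory Submission
  imports Defs
begin

text \<open>The hypothesis reads \<open>|E| > c |V|\<close> with \<open>c > t - 2\<close> and \<open>2c \<ge> t - 1\<close>.
  Pass to a vertex-minimal subgraph \<open>S\<close> with more than \<open>c |S|\<close> edges. Deleting any
  vertex destroys this property, so every vertex of \<open>S\<close> has degree \<open>> c > t - 2\<close> inside \<open>S\<close>;
  and the average degree in \<open>S\<close> exceeds \<open>2c \<ge> t - 1\<close>, so some vertex \<open>w\<close> has degree \<open>\<ge> t\<close>.
  A tree \<open>T\<close> with \<open>t\<close> edges minus a leaf \<open>x\<close> embeds greedily, leaf by leaf, into a graph of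
  minimum degree \<open>t - 1\<close> with the neighbour \<open>p\<close> of \<open>x\<close> sent to \<open>w\<close>; as \<open>w\<close> has \<open>t\<close> neighbours
  and only \<open>t - 1\<close> further vertices are used, \<open>x\<close> can be placed as well.\<close>

lemma adj_commute: "adj F u v \<longleftrightarrow> adj F v u"
  by (simp add: adj_def insert_commute)

lemma simple_graph_adjD:
  assumes "simple_graph W F" "adj F u v"
  shows "u \<in> W" "v \<in> W" "u \<noteq> v"
proof -
  have "{u, v} \<subseteq> W" "card {u, v} = 2"
    using assms unfolding simple_graph_def adj_def by auto
  then show "u \<in> W" "v \<in> W" "u \<noteq> v"
    by (auto simp: card_insert_if split: if_splits)
qed

lemma simple_graph_edge_at:
  assumes "simple_graph W F" "e \<in> F" "x \<in> e"
  obtains q where "e = {x, q}" "q \<noteq> x" "q \<in> W"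
proof -
  have "e \<subseteq> W" "card e = 2" using assms unfolding simple_graph_def by auto
  then obtain a b where "e = {a, b}" "a \<noteq> b" unfolding card_2_iff by blast
  with assms(3) \<open>e \<subseteq> W\<close> that show thesis by (auto simp: insert_commute)
qed

lemma simple_graph_singleton:
  assumes "simple_graph {a} F"
  shows "F = {}"
proof -
  have "card e \<le> card {a}" "card e = 2" if "e \<in> F" for e
    using that assms card_mono[of "{a}" e] unfolding simple_graph_def by auto
  then show ?thesis by fastforce
qed

subsection \<open>Paths and leaves\<close>

definition graph_path :: "'a set set \<Rightarrow> 'a list \<Rightarrow> bool" where
  "graph_path F vs \<longleftrightarrow> distinct vs \<and> (\<forall>i. Suc i < length vs \<longrightarrow> adj F (vs ! i) (vs ! Suc i))"

lemma graph_path_rev: "graph_path F vs \<Longrightarrow> graph_path F (rev vs)"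
  unfolding graph_path_def
proof safe
  fix i assume adj: "\<forall>i. Suc i < length vs \<longrightarrow> adj F (vs ! i) (vs ! Suc i)"
    and i: "Suc i < length (rev vs)"
  have "adj F (vs ! (length vs - Suc (Suc i))) (vs ! Suc (length vs - Suc (Suc i)))"
    using adj i by auto
  moreover have "Suc (length vs - Suc (Suc i)) = length vs - Suc i" using i by auto
  ultimately show "adj F (rev vs ! i) (rev vs ! Suc i)"
    using i by (simp add: rev_nth adj_commute)
qed simp

lemma graph_path_snoc:
  assumes "graph_path F vs" "q \<notin> set vs" "vs \<noteq> []" "adj F (last vs) q"
  shows "graph_path F (vs @ [q])"
  unfolding graph_path_def
proof safe
  fix i assume "Suc i < length (vs @ [q])"
  then consider "Suc i < length vs" | "i = length vs - 1" by fastforce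
  then show "adj F ((vs @ [q]) ! i) ((vs @ [q]) ! Suc i)"
    using assms unfolding graph_path_def by cases (auto simp: nth_append last_conv_nth)
qed (use assms in \<open>auto simp: graph_path_def\<close>)

lemma graph_path_closing_cycle:
  assumes "graph_path F vs" "j + 3 \<le> length vs" "adj F (last vs) (vs ! j)"
  shows "is_cycle F (drop j vs)"
  using assms unfolding graph_path_def is_cycle_def by (auto simp: hd_drop_conv_nth)

lemma graph_path_length_le:
  assumes sg: "simple_graph W F" and path: "graph_path F ws" and len: "length ws \<ge> 2"
  shows "length ws \<le> card W"
proof -
  have "ws ! i \<in> W" if "i < length ws" for i
  proof (cases "Suc i < length ws")
    case True
    then show ?thesis using path simple_graph_adjD(1)[OF sg] unfolding graph_path_def by blast
  next
    case False
    then have "Suc (i - 1) < length ws" "Suc (i - 1) = i" using that len by auto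
    then show ?thesis using path simple_graph_adjD(2)[OF sg] unfolding graph_path_def by metis
  qed
  then have "set ws \<subseteq> W" by (auto simp: in_set_conv_nth)
  then show ?thesis
    using sg path distinct_card[of ws] card_mono[of W "set ws"]
    unfolding graph_path_def simple_graph_def by auto
qed

definition leaf :: "'a set \<Rightarrow> 'a set set \<Rightarrow> 'a \<Rightarrow> 'a \<Rightarrow> bool" where
  "leaf W F x p \<longleftrightarrow> x \<in> W \<and> p \<in> W \<and> x \<noteq> p \<and> {x, p} \<in> F \<and> (\<forall>q. {x, q} \<in> F \<longrightarrow> q = p)"

lemma leafD:
  assumes "leaf W F x p"
  shows "x \<in> W" "p \<in> W" "x \<noteq> p" "{x, p} \<in> F"
  using assms unfolding leaf_def by blast+

lemma leaf_unique: "leaf W F x p \<Longrightarrow> {x, q} \<in> F \<Longrightarrow> q = p"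
  unfolding leaf_def by blast

text \<open>Any further neighbour of the end of a longest path would either extend the path or close
  a cycle.\<close>
lemma longest_path_last_leaf:
  assumes sg: "simple_graph W F" and ac: "acyclic_graph F"
    and path: "graph_path F vs" and len: "length vs \<ge> 2"
    and longest: "\<forall>ws. graph_path F ws \<longrightarrow> length ws \<le> length vs"
  shows "leaf W F (last vs) (vs ! (length vs - 2))"
proof -
  let ?n = "length vs" and ?p = "vs ! (length vs - 2)"
  have ne: "vs \<noteq> []" using len by auto
  then have last: "last vs = vs ! (?n - 1)" by (rule last_conv_nth)
  have "adj F ?p (vs ! Suc (?n - 2))" using path len unfolding graph_path_def by auto
  moreover have "Suc (?n - 2) = ?n - 1" using len by auto
  ultimately have adj_p: "adj F (last vs) ?p" by (simp add: last adj_commute)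
  have unique: "q = ?p" if adj_q: "adj F (last vs) q" for q
  proof (cases "q \<in> set vs")
    case False
    then have "graph_path F (vs @ [q])" using graph_path_snoc[OF path _ ne adj_q] by blast
    then show ?thesis using longest by fastforce
  next
    case True
    then obtain j where j: "j < ?n" "q = vs ! j" by (auto simp: in_set_conv_nth)
    have "j \<noteq> ?n - 1" using simple_graph_adjD(3)[OF sg adj_q] j last by auto
    moreover have "\<not> j + 3 \<le> ?n"
      using graph_path_closing_cycle[OF path _ adj_q[unfolded j(2)]] ac
      unfolding acyclic_graph_def by blast
    ultimately have "j = ?n - 2" using j(1) by linarith
    then show ?thesis using j(2) by simp
  qed
  show ?thesis
    unfolding leaf_def
    using simple_graph_adjD[OF sg adj_p] adj_p unique unfolding adj_def by blast
qed

lemma tree_two_leaves: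
  assumes tree: "is_tree W F" and "a \<in> W" "b \<in> W" "a \<noteq> b"
  obtains x p y q where "leaf W F x p" "leaf W F y q" "x \<noteq> y"
proof -
  have sg: "simple_graph W F" and ac: "acyclic_graph F" and cn: "connected_graph W F"
    using tree unfolding is_tree_def by auto
  have "(a, b) \<in> {(x, y). adj F x y}\<^sup>*" using cn assms unfolding connected_graph_def by auto
  then obtain c where ac_edge: "adj F a c" using \<open>a \<noteq> b\<close> by (cases rule: converse_rtranclE) auto
  have "graph_path F [a, c]"
    using simple_graph_adjD[OF sg ac_edge] ac_edge unfolding graph_path_def
    by (auto simp: less_Suc_eq)
  then have "\<exists>vs. (graph_path F vs \<and> length vs \<ge> 2) \<and>
      (\<forall>ws. graph_path F ws \<and> length ws \<ge> 2 \<longrightarrow> length ws \<le> length vs)"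
    using ex_has_greatest_nat[of "\<lambda>ws. graph_path F ws \<and> length ws \<ge> 2" "[a, c]" length "Suc (card W)"]
      graph_path_length_le[OF sg] by (simp add: less_Suc_eq_le)
  then obtain vs where vs: "graph_path F vs \<and> length vs \<ge> 2"
    and max: "\<forall>ws. graph_path F ws \<and> length ws \<ge> 2 \<longrightarrow> length ws \<le> length vs"
    by blast
  have longest: "\<forall>ws. graph_path F ws \<longrightarrow> length ws \<le> length vs"
    using max vs by (metis le_trans nat_le_linear)
  have "leaf W F (last vs) (vs ! (length vs - 2))"
    using longest_path_last_leaf[OF sg ac] vs longest by auto
  moreover have "leaf W F (last (rev vs)) (rev vs ! (length (rev vs) - 2))"
    using longest_path_last_leaf[OF sg ac graph_path_rev] vs longest by auto
  moreover have "last vs \<noteq> last (rev vs)"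
  proof -
    obtain u us where "vs = u # us" "us \<noteq> []" using vs by (cases vs; cases "tl vs") auto
    then show ?thesis using vs last_in_set[of us] by (auto simp: graph_path_def last_rev)
  qed
  ultimately show thesis using that by blast
qed

lemma edges_avoiding_leaf:
  assumes "simple_graph W F" "leaf W F x p"
  shows "{e\<in>F. x \<notin> e} = F - {{x, p}}"
proof -
  have "e = {x, p}" if e: "e \<in> F" "x \<in> e" for e
  proof -
    obtain q where "e = {x, q}" using simple_graph_edge_at[OF assms(1) e] .
    then show ?thesis using leaf_unique[OF assms(2)] e(1) by blast
  qed
  then show ?thesis by blast
qed

lemma tree_remove_leaf:
  assumes tree: "is_tree W F" and leaf: "leaf W F x p"
  shows "is_tree (W - {x}) {e\<in>F. x \<notin> e}"
proof -
  have sg: "simple_graph W F" and ac: "acyclic_graph F" and cn: "connected_graph W F"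
    using tree unfolding is_tree_def by auto
  let ?F = "{e\<in>F. x \<notin> e}"
  let ?R = "{(a, b). adj F a b}" and ?R' = "{(a, b). adj ?F a b}"
  text \<open>A walk from \<open>u \<noteq> x\<close> can only visit \<open>x\<close> as a detour through \<open>p\<close>.\<close>
  have walk: "(v = x \<and> (u, p) \<in> ?R'\<^sup>*) \<or> (v \<noteq> x \<and> (u, v) \<in> ?R'\<^sup>*)"
    if "(u, v) \<in> ?R\<^sup>*" "u \<noteq> x" for u v
    using that
  proof (induction rule: rtrancl_induct)
    case (step y z)
    then have yz: "{y, z} \<in> F" by (simp add: adj_def)
    show ?case
    proof (cases "y = x")
      case True
      then have "z = p" using leaf_unique[OF leaf] yz by blast
      then show ?thesis using step True leafD(3)[OF leaf] by auto
    next
      case False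
      then have "(u, y) \<in> ?R'\<^sup>*" using step by auto
      moreover have "z = x \<Longrightarrow> y = p" using yz leaf_unique[OF leaf, of y] by (simp add: insert_commute)
      moreover have "z \<noteq> x \<Longrightarrow> adj ?F y z" using yz False by (simp add: adj_def)
      ultimately show ?thesis by (auto intro: rtrancl_into_rtrancl)
    qed
  qed simp
  have "connected_graph (W - {x}) ?F"
    using leafD[OF leaf] walk cn unfolding connected_graph_def by blast
  moreover have "simple_graph (W - {x}) ?F" using sg unfolding simple_graph_def by auto
  moreover have "acyclic_graph ?F"
    using ac unfolding acyclic_graph_def is_cycle_def adj_def by blast
  ultimately show ?thesis unfolding is_tree_def by auto
qed

lemma tree_card_vertices: "is_tree W F \<Longrightarrow> card W = card F + 1"
proof (induction "card W" arbitrary: W F rule: less_induct)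
  case less
  have sg: "simple_graph W F" and cn: "connected_graph W F"
    using less.prems unfolding is_tree_def by auto
  have fin_W: "finite W" and fin_F: "finite F"
    using sg unfolding simple_graph_def by (auto intro: finite_subset[of F "Pow W"])
  show ?case
  proof (cases "\<exists>a\<in>W. \<exists>b\<in>W. a \<noteq> b")
    case True
    then obtain x p where leaf: "leaf W F x p"
      using tree_two_leaves[OF less.prems] by metis
    have x: "x \<in> W" "{x, p} \<in> F" using leafD[OF leaf] by auto
    have "card (W - {x}) = card {e\<in>F. x \<notin> e} + 1"
      using less.hyps[OF card_Diff1_less[OF fin_W x(1)] tree_remove_leaf[OF less.prems leaf]] .
    moreover have "card (W - {x}) = card W - 1" "card {e\<in>F. x \<notin> e} = card F - 1"
      using x by (simp_all add: edges_avoiding_leaf[OF sg leaf])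
    moreover have "card W > 0" "card F > 0" using x fin_W fin_F by (auto simp: card_gt_0_iff)
    ultimately show ?thesis by linarith
  next
    case False
    then obtain a where "W = {a}" using cn unfolding connected_graph_def by blast
    then show ?thesis using simple_graph_singleton[of a F] sg by simp
  qed
qed

subsection \<open>Greedy embedding of trees\<close>

definition neighbours :: "'a set set \<Rightarrow> 'a set \<Rightarrow> 'a \<Rightarrow> 'a set" where
  "neighbours E S v = {u\<in>S. {v, u} \<in> E}"

lemma embedding_extend_leaf:
  assumes sg: "simple_graph W F" and leaf: "leaf W F x p"
    and E2: "\<forall>e\<in>E. card e = 2"
    and inj: "inj_on f (W - {x})" and into: "f ` (W - {x}) \<subseteq> S"
    and edges: "\<forall>e\<in>{e\<in>F. x \<notin> e}. f ` e \<in> E"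
    and room: "card (neighbours E S (f p)) > card W - 2"
  obtains g where "inj_on g W" "g ` W \<subseteq> S" "\<forall>e\<in>F. g ` e \<in> E" "\<forall>z\<in>W - {x}. g z = f z"
proof -
  have fin_W: "finite W" using sg unfolding simple_graph_def by auto
  note x = leafD[OF leaf]
  let ?A = "f ` (W - {x} - {p})"
  have "card ?A \<le> card (W - {x} - {p})" by (simp add: card_image_le fin_W)
  also have "\<dots> = card W - 2" using x by (simp add: card_Diff_singleton_if)
  finally have "card ?A < card (neighbours E S (f p))" using room by linarith
  then have "\<not> neighbours E S (f p) \<subseteq> ?A"
    using fin_W by (meson card_mono finite_Diff finite_imageI leD)
  then obtain y where y: "y \<in> S" "{f p, y} \<in> E" "y \<notin> ?A"
    unfolding neighbours_def by auto
  have "y \<noteq> f p" using E2 y(2) by force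
  then have y_new: "y \<notin> f ` (W - {x})" using y(3) by auto
  define g where "g = f(x := y)"
  have "inj_on g (insert x (W - {x}))"
    using inj y_new unfolding g_def inj_on_def by auto
  then have "inj_on g W" using x(1) by (simp add: insert_absorb)
  moreover have "g ` W \<subseteq> S" using into y(1) unfolding g_def by auto
  moreover have "g ` e \<in> E" if e: "e \<in> F" for e
  proof (cases "x \<in> e")
    case True
    then obtain q where "e = {x, q}" "q \<noteq> x" by (rule simple_graph_edge_at[OF sg e])
    then have "e = {x, p}" using leaf_unique[OF leaf] e by blast
    then show ?thesis using x(3) y(2) by (simp add: g_def)
  next
    case False
    then have "g ` e = f ` e" unfolding g_def by auto
    then show ?thesis using edges e False by auto
  qed
  ultimately show thesis using that unfolding g_def by auto
qed

lemma embed_tree_min_degree: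
  assumes E2: "\<forall>e\<in>E. card e = 2"
    and deg: "\<forall>v\<in>S. card (neighbours E S v) \<ge> k"
    and "s \<in> S"
  shows "is_tree W F \<Longrightarrow> card W \<le> k + 1 \<Longrightarrow> r \<in> W \<Longrightarrow>
    \<exists>f. inj_on f W \<and> f ` W \<subseteq> S \<and> f r = s \<and> (\<forall>e\<in>F. f ` e \<in> E)"
proof (induction "card W" arbitrary: W F rule: less_induct)
  case less
  have sg: "simple_graph W F" using less.prems(1) unfolding is_tree_def by auto
  have fin_W: "finite W" using sg unfolding simple_graph_def by auto
  show ?case
  proof (cases "\<exists>a\<in>W. \<exists>b\<in>W. a \<noteq> b")
    case False
    then have "W = {r}" using less.prems(3) by auto
    moreover have "F = {}" using simple_graph_singleton[of r F] sg \<open>W = {r}\<close> by simp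
    ultimately show ?thesis using \<open>s \<in> S\<close> by (intro exI[of _ "\<lambda>_. s"]) simp
  next
    case True
    then obtain a b where ab: "a \<in> W" "b \<in> W" "a \<noteq> b" by auto
    obtain x p where leaf: "leaf W F x p" and "x \<noteq> r"
    proof -
      obtain x1 p1 x2 p2 where "leaf W F x1 p1" "leaf W F x2 p2" "x1 \<noteq> x2"
        using tree_two_leaves[OF less.prems(1) ab] .
      then show thesis using that by (cases "x1 = r") auto
    qed
    note x = leafD[OF leaf]
    have smaller: "card (W - {x}) < card W" using card_Diff1_less[OF fin_W x(1)] .
    have "card (W - {x}) \<le> k + 1" and r: "r \<in> W - {x}"
      using less.prems(2,3) smaller \<open>x \<noteq> r\<close> by auto
    then obtain f where f: "inj_on f (W - {x})" "f ` (W - {x}) \<subseteq> S" "f r = s"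
        "\<forall>e\<in>{e\<in>F. x \<notin> e}. f ` e \<in> E"
      using less.hyps[OF smaller tree_remove_leaf[OF less.prems(1) leaf]] by blast
    have "f p \<in> S" using f(2) x(2,3) by auto
    then have "card (neighbours E S (f p)) \<ge> k" using deg by blast
    moreover have "card W \<ge> 2" using ab card_mono[OF fin_W, of "{a, b}"] by auto
    ultimately have "card (neighbours E S (f p)) > card W - 2" using less.prems(2) by linarith
    then obtain g where g: "inj_on g W" "g ` W \<subseteq> S" "\<forall>e\<in>F. g ` e \<in> E" "\<forall>z\<in>W - {x}. g z = f z"
      by (rule embedding_extend_leaf[OF sg leaf E2 f(1,2,4)])
    have "g r = s" using g(4) f(3) r by auto
    then show ?thesis using g(1-3) by blast
  qed
qed

lemma embed_tree_min_degree_plus_one: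
  assumes E2: "\<forall>e\<in>E. card e = 2"
    and deg: "\<forall>v\<in>S. card (neighbours E S v) \<ge> t - 1"
    and w: "w \<in> S" "card (neighbours E S w) \<ge> t"
    and tree: "is_tree W F" and "card F = t" "t > 0"
  obtains f where "inj_on f W" "f ` W \<subseteq> S" "\<forall>e\<in>F. f ` e \<in> E"
proof -
  have sg: "simple_graph W F" using tree unfolding is_tree_def by auto
  have fin_W: "finite W" using sg unfolding simple_graph_def by auto
  have card_W: "card W = t + 1" using tree_card_vertices[OF tree] \<open>card F = t\<close> by simp
  then have "\<not> card W \<le> Suc 0" using \<open>t > 0\<close> by simp
  then obtain a b where "a \<in> W" "b \<in> W" "a \<noteq> b"
    using card_le_Suc0_iff_eq[OF fin_W] by blast
  then obtain x p y q where leaf: "leaf W F x p" and "leaf W F y q" "x \<noteq> y"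
    by (rule tree_two_leaves[OF tree])
  note x = leafD[OF leaf]
  have size: "card (W - {x}) \<le> (t - 1) + 1" and p: "p \<in> W - {x}"
    using card_W fin_W x \<open>t > 0\<close> by auto
  obtain f where f: "inj_on f (W - {x})" "f ` (W - {x}) \<subseteq> S" "f p = w"
      "\<forall>e\<in>{e\<in>F. x \<notin> e}. f ` e \<in> E"
    using embed_tree_min_degree[OF E2 deg w(1) tree_remove_leaf[OF tree leaf] size p] by blast
  have "card (neighbours E S (f p)) > card W - 2" using w(2) f(3) card_W \<open>t > 0\<close> by simp
  then obtain g where "inj_on g W" "g ` W \<subseteq> S" "\<forall>e\<in>F. g ` e \<in> E"
    by (rule embedding_extend_leaf[OF sg leaf E2 f(1,2,4)])
  then show thesis by (rule that)
qed

subsection \<open>Dense subgraphs\<close>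

definition edges_within :: "'a set set \<Rightarrow> 'a set \<Rightarrow> 'a set set" where
  "edges_within E S = {e\<in>E. e \<subseteq> S}"

lemma card_edges_at_vertex:
  assumes E2: "\<forall>e\<in>E. card e = 2" and "v \<in> S"
  shows "card {e\<in>edges_within E S. v \<in> e} = card (neighbours E S v)"
proof -
  have "e \<in> (\<lambda>u. {v, u}) ` neighbours E S v" if "e \<in> E" "e \<subseteq> S" "v \<in> e" for e
  proof -
    obtain a b where "e = {a, b}" using E2 \<open>e \<in> E\<close> unfolding card_2_iff by blast
    then show ?thesis using that unfolding neighbours_def by (auto simp: insert_commute)
  qed
  then have "bij_betw (\<lambda>u. {v, u}) (neighbours E S v) {e\<in>edges_within E S. v \<in> e}"
    using \<open>v \<in> S\<close> unfolding bij_betw_def inj_on_def neighbours_def edges_within_def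
    by (auto simp: doubleton_eq_iff)
  then show ?thesis by (simp add: bij_betw_same_card)
qed

lemma finite_edges_within: "finite S \<Longrightarrow> finite (edges_within E S)"
  unfolding edges_within_def by (rule finite_subset[of _ "Pow S"]) auto

lemma card_edges_within_remove:
  assumes E2: "\<forall>e\<in>E. card e = 2" and fin_S: "finite S" and "v \<in> S"
  shows "card (edges_within E S) = card (edges_within E (S - {v})) + card (neighbours E S v)"
proof -
  let ?A = "edges_within E (S - {v})" and ?B = "{e\<in>edges_within E S. v \<in> e}"
  have "edges_within E S = ?A \<union> ?B" unfolding edges_within_def by auto
  then have "card (edges_within E S) = card (?A \<union> ?B)" by (rule arg_cong)
  also have "\<dots> = card ?A + card ?B"
    using finite_edges_within[OF fin_S] finite_edges_within[of "S - {v}"] fin_S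
    by (intro card_Un_disjoint) (auto simp: edges_within_def)
  also have "\<dots> = card ?A + card (neighbours E S v)"
    using card_edges_at_vertex[OF E2 \<open>v \<in> S\<close>] by simp
  finally show ?thesis .
qed

lemma handshake:
  assumes E2: "\<forall>e\<in>E. card e = 2" and fin_S: "finite S"
  shows "2 * card (edges_within E S) = (\<Sum>v\<in>S. card (neighbours E S v))"
proof -
  let ?A = "edges_within E S"
  have fin_A: "finite ?A" using finite_edges_within[OF fin_S] .
  have "(\<Sum>v\<in>S. card (neighbours E S v)) = (\<Sum>v\<in>S. card {e\<in>?A. v \<in> e})"
    using card_edges_at_vertex[OF E2] by simp
  also have "\<dots> = (\<Sum>v\<in>S. \<Sum>e\<in>?A. if v \<in> e then 1 else 0)"
    by (simp add: sum.inter_filter[OF fin_A, symmetric])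
  also have "\<dots> = (\<Sum>e\<in>?A. \<Sum>v\<in>S. if v \<in> e then 1 else 0)" by (rule sum.swap)
  also have "\<dots> = (\<Sum>e\<in>?A. card {v\<in>S. v \<in> e})"
    by (simp add: sum.inter_filter[OF fin_S, symmetric])
  also have "\<dots> = (\<Sum>e\<in>?A. 2)"
  proof (rule sum.cong)
    fix e assume "e \<in> ?A"
    then have "{v\<in>S. v \<in> e} = e" "card e = 2" using E2 by (auto simp: edges_within_def)
    then show "card {v\<in>S. v \<in> e} = 2" by simp
  qed simp
  finally show ?thesis by simp
qed

lemma exists_minimal_subset:
  "finite V \<Longrightarrow> P V \<Longrightarrow> \<exists>S\<subseteq>V. P S \<and> (\<forall>v\<in>S. \<not> P (S - {v}))"
proof (induction "card V" arbitrary: V rule: less_induct)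
  case less
  show ?case
  proof (cases "\<forall>v\<in>V. \<not> P (V - {v})")
    case True
    then show ?thesis using less.prems by blast
  next
    case False
    then obtain v where v: "v \<in> V" "P (V - {v})" by auto
    have "\<exists>S\<subseteq>V - {v}. P S \<and> (\<forall>u\<in>S. \<not> P (S - {u}))"
      using less.hyps[OF card_Diff1_less[OF less.prems(1) v(1)] finite_Diff[OF less.prems(1)] v(2)] .
    then show ?thesis by blast
  qed
qed

lemma dense_subgraph:
  assumes E2: "\<forall>e\<in>E. card e = 2" and fin_V: "finite V"
    and dense: "real (card (edges_within E V)) > c * real (card V)"
  obtains S where "S \<subseteq> V" "\<forall>v\<in>S. real (card (neighbours E S v)) > c"
    "\<exists>w\<in>S. real (card (neighbours E S w)) > 2 * c"
proof -
  obtain S where S: "S \<subseteq> V" "real (card (edges_within E S)) > c * real (card S)"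
    and minimal: "\<forall>v\<in>S. \<not> real (card (edges_within E (S - {v}))) > c * real (card (S - {v}))"
    using exists_minimal_subset[OF fin_V, of "\<lambda>S. real (card (edges_within E S)) > c * real (card S)"]
      dense by blast
  have fin_S: "finite S" using finite_subset[OF S(1) fin_V] .
  have "real (card (neighbours E S v)) > c" if v: "v \<in> S" for v
  proof -
    have "real (card (edges_within E (S - {v}))) \<le> c * real (card (S - {v}))"
      using minimal v by (meson not_less)
    moreover have "real (card S) = real (card (S - {v})) + 1"
      using card.remove[OF fin_S v] by simp
    moreover have "real (card (edges_within E S))
        = real (card (edges_within E (S - {v}))) + real (card (neighbours E S v))"
      using card_edges_within_remove[OF E2 fin_S v] by simp
    ultimately show ?thesis using S(2) by (simp add: algebra_simps)
  qed
  moreover have "\<exists>w\<in>S. real (card (neighbours E S w)) > 2 * c"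
  proof (rule ccontr)
    assume "\<not> ?thesis"
    then have "(\<Sum>v\<in>S. real (card (neighbours E S v))) \<le> (\<Sum>v\<in>S. 2 * c)"
      by (intro sum_mono) (simp add: not_less)
    moreover have "(\<Sum>v\<in>S. real (card (neighbours E S v))) = 2 * real (card (edges_within E S))"
      using arg_cong[OF handshake[OF E2 fin_S], of real] by simp
    ultimately show False using S(2) by (simp add: algebra_simps)
  qed
  ultimately show thesis using that S(1) by blast
qed

lemma threshold_bounds:
  fixes t :: nat and c :: real
  assumes "t > 0"
    and "c = (1 - 1 / real (t + 1)) * (real t - 1) \<or> c = (1 - 1 / real t) * (real t - 1)"
  shows "real t - 2 < c" "real t - 1 \<le> 2 * c"
proof -
  have t: "real t \<ge> 1" using assms(1) by simp
  have "0 \<le> (real t - 1) * (real t - 2)"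
    using assms(1) by (cases "t = 1") auto
  then have "0 \<le> (real t - 1) * (real t - 2) / real t" by simp
  moreover have "(1 - 1 / real (t + 1)) * (real t - 1) = real t - 2 + 2 / (real t + 1)"
    "2 * ((1 - 1 / real (t + 1)) * (real t - 1)) = real t - 1 + (real t - 1)\<^sup>2 / (real t + 1)"
    "(1 - 1 / real t) * (real t - 1) = real t - 2 + 1 / real t"
    "2 * ((1 - 1 / real t) * (real t - 1)) = real t - 1 + (real t - 1) * (real t - 2) / real t"
    using t by (simp_all add: field_simps power2_eq_square)
  moreover have "2 / (real t + 1) > 0" "(real t - 1)\<^sup>2 / (real t + 1) \<ge> 0" "1 / real t > 0"
    using t by simp_all
  ultimately show "real t - 2 < c" "real t - 1 \<le> 2 * c"
    using assms(2) by auto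
qed

theorem proposition4p2:
  fixes V :: "'a set" and E :: "'a set set" and t :: nat
  assumes "t > 0"
    and "simple_graph V E"
    and "odd t \<Longrightarrow> real (card E) > (1 - 1 / real (t + 1)) * (real t - 1) * real (card V)"
    and "even t \<Longrightarrow> real (card E) > (1 - 1 / real t) * (real t - 1) * real (card V)"
  shows "\<forall>(W :: 'b set) (F :: 'b set set). is_tree W F \<and> card F = t \<longrightarrow> contains_subgraph V E W F"
proof (intro allI impI)
  fix W :: "'b set" and F assume tree: "is_tree W F \<and> card F = t"
  define c where "c = (if odd t then (1 - 1 / real (t + 1)) else (1 - 1 / real t)) * (real t - 1)"
  have c: "real t - 2 < c" "real t - 1 \<le> 2 * c"
    using threshold_bounds[OF \<open>t > 0\<close>, of c] by (auto simp: c_def)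
  have E2: "\<forall>e\<in>E. card e = 2" and fin_V: "finite V" and "edges_within E V = E"
    using assms(2) unfolding simple_graph_def edges_within_def by auto
  then have "real (card (edges_within E V)) > c * real (card V)"
    using assms(3,4) by (auto simp: c_def)
  then obtain S where S: "S \<subseteq> V" "\<forall>v\<in>S. real (card (neighbours E S v)) > c"
      and "\<exists>w\<in>S. real (card (neighbours E S w)) > 2 * c"
    by (rule dense_subgraph[OF E2 fin_V])
  then obtain w where "w \<in> S" "card (neighbours E S w) \<ge> t" using c by force
  moreover have "\<forall>v\<in>S. card (neighbours E S v) \<ge> t - 1" using S(2) c by force
  ultimately obtain f where "inj_on f W" "f ` W \<subseteq> S" "\<forall>e\<in>F. f ` e \<in> E"
    using embed_tree_min_degree_plus_one[OF E2] tree \<open>t > 0\<close> by metis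
  then show "contains_subgraph V E W F" unfolding contains_subgraph_def using S(1) by blast
qed

end
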